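(* $E_{range}<_{\mathrm{Learn}}E_3$: every $E_{range}$-learnable family of structures is $E_3$-learnable, and there is a family that is $E_3$-learnable but not $E_{range}$-learnable.
   Context: All structures are countable, have domain $\mathbb{N}$, are in a finite relational signature, and are identified with their atomic diagrams (elements of $2^{\mathbb{N}}$). A family of structures is a countable set of pairwise nonisomorphic such structures. $\mathrm{LD}(\mathfrak{K})\subseteq 2^{\mathbb{N}}$ is the set of structures with domain $\mathbb{N}$ isomorphic to a member of $\mathfrak{K}$ (subspace topology). For an equivalence relation $E$ on a space $X$, $\mathfrak{K}$ is $E$-learnable if there is a continuous $\Gamma:\mathrm{LD}(\mathfrak{K})\to X$ with $\mathcal{S}\cong\mathcal{S}'\iff\Gamma(\mathcal{S})\,E\,\Gamma(\mathcal{S}')$ for all $\mathcal{S},\mathcal{S}'\in\mathrm{LD}(\mathfrak{K})$. On Baire space: $p\,E_0\,q\iff\exists m\,\forall n\ge m\ p(n)=q(n)$; $p\,E_{range}\,q\iff\{p(m):m\}=\{q(m):m\}$. Fix a computable bijection $\langle\cdot,\cdot\rangle:\mathbb{N}^2\to\mathbb{N}$; for $p\in\mathbb{N}^{\mathbb{N}\times\mathbb{N}}$ the $m$-th column is $p^{[m]}(n)=p(\langle m,n\rangle)$, and $p\,E_3\,q\iff\forall m\ p^{[m]}\,E_0\,q^{[m]}$. $X\leq_{\mathrm{Learn}}Y$ means every $X$-learnable family is $Y$-learnable; $<_{\mathrm{Learn}}$ means $\leq_{\mathrm{Learn}}$ and not the converse. *)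

theory Defs
  imports "HOL-Analysis.Analysis" "HOL-Library.Nat_Bijection"
begin

text \<open>A finite relational signature is given by the list of arities of its relation symbols.
  A structure with domain nat is identified with its atomic diagram, an element of 2^nat:
  bit n holds iff the atomic fact coded by n is true, where n codes the pair (i, xs)
  (relation symbol i applied to tuple xs) via the computable bijection
  prod_encode (i, list_encode xs).\<close>

type_synonym signature = "nat list"
type_synonym diagram = "nat \<Rightarrow> bool"

definition atom_code :: "nat \<Rightarrow> nat list \<Rightarrow> nat" where
  "atom_code i xs = prod_encode (i, list_encode xs)"

definition well_formed_code :: "signature \<Rightarrow> nat \<Rightarrow> bool" where
  "well_formed_code sig n \<longleftrightarrow>
     (\<exists>i xs. i < length sig \<and> length xs = sig ! i \<and> n = atom_code i xs)"

definition Structures :: "signature \<Rightarrow> diagram set" where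
  "Structures sig = {D. \<forall>n. D n \<longrightarrow> well_formed_code sig n}"

definition iso :: "signature \<Rightarrow> diagram \<Rightarrow> diagram \<Rightarrow> bool" where
  "iso sig A B \<longleftrightarrow> (\<exists>f :: nat \<Rightarrow> nat. bij f \<and>
     (\<forall>i < length sig. \<forall>xs. length xs = sig ! i \<longrightarrow>
        (A (atom_code i xs) \<longleftrightarrow> B (atom_code i (map f xs)))))"

definition family :: "signature \<Rightarrow> diagram set \<Rightarrow> bool" where
  "family sig K \<longleftrightarrow> K \<subseteq> Structures sig \<and> countable K \<and>
     (\<forall>A\<in>K. \<forall>B\<in>K. A \<noteq> B \<longrightarrow> \<not> iso sig A B)"

definition LD :: "signature \<Rightarrow> diagram set \<Rightarrow> diagram set" where
  "LD sig K = {S \<in> Structures sig. \<exists>A\<in>K. iso sig S A}"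

definition cantor_top :: "(nat \<Rightarrow> bool) topology" where
  "cantor_top = product_topology (\<lambda>_. discrete_topology UNIV) UNIV"

definition baire_top :: "(nat \<Rightarrow> nat) topology" where
  "baire_top = product_topology (\<lambda>_. discrete_topology UNIV) UNIV"

definition learnable ::
  "signature \<Rightarrow> diagram set \<Rightarrow> 'a topology \<Rightarrow> ('a \<Rightarrow> 'a \<Rightarrow> bool) \<Rightarrow> bool" where
  "learnable sig K X E \<longleftrightarrow> (\<exists>\<Gamma>. continuous_map (subtopology cantor_top (LD sig K)) X \<Gamma> \<and>
     (\<forall>S\<in>LD sig K. \<forall>S'\<in>LD sig K. iso sig S S' \<longleftrightarrow> E (\<Gamma> S) (\<Gamma> S')))"

definition E0 :: "(nat \<Rightarrow> nat) \<Rightarrow> (nat \<Rightarrow> nat) \<Rightarrow> bool" where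
  "E0 p q \<longleftrightarrow> (\<exists>m. \<forall>n\<ge>m. p n = q n)"

definition E_range :: "(nat \<Rightarrow> nat) \<Rightarrow> (nat \<Rightarrow> nat) \<Rightarrow> bool" where
  "E_range p q \<longleftrightarrow> range p = range q"

definition column :: "(nat \<Rightarrow> nat) \<Rightarrow> nat \<Rightarrow> (nat \<Rightarrow> nat)" where
  "column p m = (\<lambda>n. p (prod_encode (m, n)))"

definition E3 :: "(nat \<Rightarrow> nat) \<Rightarrow> (nat \<Rightarrow> nat) \<Rightarrow> bool" where
  "E3 p q \<longleftrightarrow> (\<forall>m. E0 (column p m) (column q m))"

definition learn_le ::
  "'a topology \<Rightarrow> ('a \<Rightarrow> 'a \<Rightarrow> bool) \<Rightarrow> 'b topology \<Rightarrow> ('b \<Rightarrow> 'b \<Rightarrow> bool) \<Rightarrow> bool" where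
  "learn_le X E Y F \<longleftrightarrow>
     (\<forall>sig K. family sig K \<longrightarrow> learnable sig K X E \<longrightarrow> learnable sig K Y F)"

end

theory Submission
  imports Defs "HOL-Combinatorics.Transposition"
begin

text \<open>
  For the first part, compose an E_range-learner with the continuous map sending p to the
  sequence whose k-th column is, at stage n, the indicator of "k occurs among p 0, ..., p n":
  this column is eventually constant, with value 1 iff k \<in> range p.

  For the second part take the equivalence structures K1 and K2 which both have infinitely many
  infinite classes and, besides, one class of size 1 resp. 2. "Some class has size 1" and "some
  class has size 2" are \<Sigma>2 properties, exactly one of which holds on the copies, so a learner
  can settle between them in the limit, which already gives E0-learnability in column 0. On the
  other hand every finite part of a copy of K1 extends to a copy of K2 and vice versa. A
  continuous learner fixes each output value from a finite part of its input, so an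
  E_range-learner would give K1 and K2 the same range and hence identify them.
\<close>

section \<open>Continuity on product spaces of discrete spaces\<close>

lemma openin_product_discrete_cylinder:
  fixes p :: "'a \<Rightarrow> 'b"
  assumes "finite C"
  shows "openin (product_topology (\<lambda>_. discrete_topology UNIV) UNIV) {q. \<forall>c\<in>C. q c = p c}"
proof -
  have cylinder: "{q. \<forall>c\<in>C. q c = p c} = Pi\<^sub>E UNIV (\<lambda>c. if c \<in> C then {p c} else UNIV)"
    by (auto simp: PiE_iff) (metis singletonD)
  have "{c. (if c \<in> C then {p c} else UNIV) \<noteq> UNIV} \<subseteq> C"
    by auto
  then show ?thesis
    unfolding cylinder using assms by (subst openin_PiE_gen) (auto intro: finite_subset)
qed

lemma continuous_map_product_discrete_if_finitely_determined:
  fixes g :: "('a \<Rightarrow> 'b) \<Rightarrow> 'c \<Rightarrow> 'd"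
  assumes "\<And>k. \<exists>C. finite C \<and> (\<forall>p q. (\<forall>c\<in>C. p c = q c) \<longrightarrow> g p k = g q k)"
  shows "continuous_map (product_topology (\<lambda>_. discrete_topology UNIV) UNIV)
           (product_topology (\<lambda>_. discrete_topology UNIV) UNIV) g"
  unfolding continuous_map_componentwise_UNIV
proof
  fix k
  obtain C where C: "finite C" "\<And>p q. \<forall>c\<in>C. p c = q c \<Longrightarrow> g p k = g q k"
    using assms by blast
  have "openin (product_topology (\<lambda>_. discrete_topology UNIV) UNIV) {p. g p k \<in> U}" for U
    unfolding openin_subopen[of _ "{p. g p k \<in> U}"]
  proof
    fix p assume "p \<in> {p. g p k \<in> U}"
    then show "\<exists>T. openin (product_topology (\<lambda>_. discrete_topology UNIV) UNIV) T \<and> p \<in> T \<and>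
        T \<subseteq> {p. g p k \<in> U}"
      using C by (intro exI[of _ "{q. \<forall>c\<in>C. q c = p c}"])
        (auto simp: openin_product_discrete_cylinder, metis)
  qed
  then show "continuous_map (product_topology (\<lambda>_. discrete_topology UNIV) UNIV)
      (discrete_topology UNIV) (\<lambda>p. g p k)"
    by (simp add: continuous_map)
qed

lemma continuous_map_cantor_baire_finitely_determined:
  assumes G: "continuous_map (subtopology cantor_top L) baire_top G" and "X \<in> L"
  obtains N where "\<And>D. D \<in> L \<Longrightarrow> \<forall>n\<le>N. D n = X n \<Longrightarrow> G D m = G X m"
proof -
  have "continuous_map baire_top (discrete_topology UNIV) (\<lambda>p. p m)"
    unfolding baire_top_def by (rule continuous_map_product_projection) simp
  then have "openin baire_top {p. p m = G X m}"
    using openin_continuous_map_preimage[of baire_top _ _ "{G X m}"] by (simp add: baire_top_def)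
  then have "openin (subtopology cantor_top L)
      {D \<in> topspace (subtopology cantor_top L). G D \<in> {p. p m = G X m}}"
    by (rule openin_continuous_map_preimage[OF G])
  then have "openin (subtopology cantor_top L) {D \<in> L. G D m = G X m}"
    by (simp add: cantor_top_def)
  then obtain T where T: "openin cantor_top T" "{D \<in> L. G D m = G X m} = T \<inter> L"
    by (auto simp: openin_subtopology)
  moreover have "X \<in> T"
    using T(2) \<open>X \<in> L\<close> by blast
  ultimately obtain U where U: "finite {i. U i \<noteq> UNIV}" "X \<in> Pi\<^sub>E UNIV U" "Pi\<^sub>E UNIV U \<subseteq> T"
    unfolding cantor_top_def openin_product_topology_alt by auto
  obtain N where N: "\<And>i. U i \<noteq> UNIV \<Longrightarrow> i \<le> N"
    using U(1) finite_nat_set_iff_bounded_le by auto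
  show thesis
  proof (rule that)
    fix D assume "D \<in> L" "\<forall>n\<le>N. D n = X n"
    then have "D i \<in> U i" for i
      using U(2) N by (cases "U i = UNIV") (auto simp: PiE_iff)
    then have "D \<in> Pi\<^sub>E UNIV U"
      by (simp add: PiE_iff)
    with U(3) have "D \<in> T \<inter> L"
      using \<open>D \<in> L\<close> by blast
    then show "G D m = G X m"
      using T(2) by (metis (mono_tags, lifting) mem_Collect_eq)
  qed
qed

section \<open>E0, E3 and the reduction of E_range to E3\<close>

lemma E0_iff_eventually: "E0 p q \<longleftrightarrow> eventually (\<lambda>n. p n = q n) sequentially"
  by (simp add: E0_def eventually_sequentially)

lemma E0_eventually_const_iff:
  assumes "eventually (\<lambda>n. p n = v) sequentially" "eventually (\<lambda>n. q n = w) sequentially"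
  shows "E0 p q \<longleftrightarrow> v = w"
proof
  assume "E0 p q"
  then have "eventually (\<lambda>n. v = w) sequentially"
    using assms unfolding E0_iff_eventually by eventually_elim simp
  then show "v = w"
    by simp
next
  assume "v = w"
  show "E0 p q"
    using assms unfolding E0_iff_eventually by eventually_elim (simp add: \<open>v = w\<close>)
qed

lemma eventually_column:
  assumes "eventually (\<lambda>n. p n = v) sequentially"
  shows "eventually (\<lambda>n. column p k n = v) sequentially"
proof -
  have "filterlim (\<lambda>n. prod_encode (k, n)) sequentially sequentially"
    by (rule filterlim_at_top_mono[OF filterlim_ident]) (simp add: le_prod_encode_2)
  from eventually_compose_filterlim[OF assms this] show ?thesis
    by (simp add: column_def)
qed

lemma E3_eventually_const_iff:
  assumes "eventually (\<lambda>n. p n = v) sequentially" "eventually (\<lambda>n. q n = w) sequentially"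
  shows "E3 p q \<longleftrightarrow> v = w"
  using E0_eventually_const_iff[OF eventually_column[OF assms(1)] eventually_column[OF assms(2)]]
  unfolding E3_def by blast

lemma learnable_continuous_reduction:
  assumes "learnable sig K X E" "continuous_map X Y h" "\<And>p q. E p q \<longleftrightarrow> F (h p) (h q)"
  shows "learnable sig K Y F"
proof -
  obtain \<Gamma> where \<Gamma>: "continuous_map (subtopology cantor_top (LD sig K)) X \<Gamma>"
    "\<forall>S\<in>LD sig K. \<forall>S'\<in>LD sig K. iso sig S S' \<longleftrightarrow> E (\<Gamma> S) (\<Gamma> S')"
    using assms(1) unfolding learnable_def by blast
  show ?thesis
    unfolding learnable_def
    using continuous_map_compose[OF \<Gamma>(1) assms(2)] \<Gamma>(2) assms(3) by auto
qed

definition occurrence_indicator :: "(nat \<Rightarrow> nat) \<Rightarrow> nat \<Rightarrow> nat" where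
  "occurrence_indicator p j = (case prod_decode j of (k, n) \<Rightarrow> if \<exists>i\<le>n. p i = k then 1 else 0)"

lemma eventually_column_occurrence_indicator:
  "eventually (\<lambda>n. column (occurrence_indicator p) k n = (if k \<in> range p then 1 else 0)) sequentially"
proof (cases "k \<in> range p")
  case True
  then obtain i where "p i = k"
    by blast
  then have "\<forall>n\<ge>i. column (occurrence_indicator p) k n = 1"
    by (auto simp: column_def occurrence_indicator_def)
  with True show ?thesis
    by (auto simp: eventually_sequentially)
next
  case False
  then have "\<forall>n. column (occurrence_indicator p) k n = 0"
    by (auto simp: column_def occurrence_indicator_def)
  with False show ?thesis
    by simp
qed

lemma E3_occurrence_indicator_iff:
  "E3 (occurrence_indicator p) (occurrence_indicator q) \<longleftrightarrow> E_range p q"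
  using E0_eventually_const_iff[OF eventually_column_occurrence_indicator
      eventually_column_occurrence_indicator]
  unfolding E3_def E_range_def by (auto simp: set_eq_iff)

lemma continuous_map_occurrence_indicator:
  "continuous_map baire_top baire_top occurrence_indicator"
  unfolding baire_top_def
proof (rule continuous_map_product_discrete_if_finitely_determined)
  fix j
  show "\<exists>C. finite C \<and> (\<forall>p q. (\<forall>c\<in>C. p c = q c) \<longrightarrow>
      occurrence_indicator p j = occurrence_indicator q j)"
    by (intro exI[of _ "{..snd (prod_decode j)}"])
      (auto simp: occurrence_indicator_def split: prod.splits, (metis atMost_iff)+)
qed

lemma learn_le_E_range_E3: "learn_le baire_top E_range baire_top E3"
  unfolding learn_le_def
  using learnable_continuous_reduction[OF _ continuous_map_occurrence_indicator]
    E3_occurrence_indicator_iff by metis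

lemma iso_refl: "iso sig A A"
  unfolding iso_def by (rule exI[of _ id]) auto

lemma iso_sym:
  assumes "iso sig A B"
  shows "iso sig B A"
proof -
  obtain f where f: "bij f" "\<forall>i<length sig. \<forall>xs. length xs = sig ! i \<longrightarrow>
      (A (atom_code i xs) \<longleftrightarrow> B (atom_code i (map f xs)))"
    using assms unfolding iso_def by blast
  have "map f (map (inv f) xs) = xs" for xs
    using f(1) by (simp add: map_idI bij_is_surj surj_f_inv_f)
  then show ?thesis
    unfolding iso_def using f by (intro exI[of _ "inv f"]) (auto simp: bij_imp_bij_inv)
qed

lemma iso_trans:
  assumes "iso sig A B" "iso sig B C"
  shows "iso sig A C"
proof -
  obtain f where f: "bij f" "\<forall>i<length sig. \<forall>xs. length xs = sig ! i \<longrightarrow>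
      (A (atom_code i xs) \<longleftrightarrow> B (atom_code i (map f xs)))"
    using assms(1) unfolding iso_def by blast
  obtain g where g: "bij g" "\<forall>i<length sig. \<forall>xs. length xs = sig ! i \<longrightarrow>
      (B (atom_code i xs) \<longleftrightarrow> C (atom_code i (map g xs)))"
    using assms(2) unfolding iso_def by blast
  show ?thesis
    unfolding iso_def using f g by (intro exI[of _ "g \<circ> f"]) (auto simp: bij_comp)
qed

lemma iso_iff_iso_same_in_LD_pair:
  assumes "S \<in> LD sig {A, B}" "S' \<in> LD sig {A, B}" "\<not> iso sig A B"
  shows "iso sig S S' \<longleftrightarrow> (iso sig S A \<longleftrightarrow> iso sig S' A)"
proof -
  have "iso sig S A \<or> iso sig S B" "iso sig S' A \<or> iso sig S' B"
    using assms(1,2) by (auto simp: LD_def)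
  with assms(3) show ?thesis
    by (meson iso_sym iso_trans)
qed

lemma atom_code_eq_iff [simp]: "atom_code i xs = atom_code j ys \<longleftrightarrow> i = j \<and> xs = ys"
  by (simp add: atom_code_def list_encode_eq)

lemma le_atom_code_binary: "x \<le> atom_code 0 [x, y]" "y \<le> atom_code 0 [x, y]"
proof -
  have "list_encode [x, y] \<le> atom_code 0 [x, y]"
    unfolding atom_code_def by (rule le_prod_encode_2)
  moreover have "prod_encode (x, list_encode [y]) \<le> list_encode [x, y]"
    by simp
  moreover have "prod_encode (y, 0) \<le> list_encode [y]"
    by simp
  ultimately show "x \<le> atom_code 0 [x, y]" "y \<le> atom_code 0 [x, y]"
    using le_prod_encode_1[of x "list_encode [y]"] le_prod_encode_2[of "list_encode [y]" x]
      le_prod_encode_1[of y 0] by linarith+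
qed

lemma ex_length_2_iff: "(\<exists>xs::'a list. length xs = 2 \<and> P xs) \<longleftrightarrow> (\<exists>x y. P [x, y])"
  by (auto simp: numeral_2_eq_2 length_Suc_conv)

lemma well_formed_code_binary_iff: "well_formed_code [2] n \<longleftrightarrow> (\<exists>x y. n = atom_code 0 [x, y])"
  unfolding well_formed_code_def by (simp add: ex_length_2_iff less_Suc_eq)

lemma iso_binary_iff:
  "iso [2] A B \<longleftrightarrow> (\<exists>f. bij f \<and> (\<forall>x y. A (atom_code 0 [x, y]) = B (atom_code 0 [f x, f y])))"
proof -
  have "(\<forall>xs::nat list. length xs = 2 \<longrightarrow> P xs) \<longleftrightarrow> (\<forall>x y. P [x, y])" for P
    using ex_length_2_iff[of "\<lambda>xs. \<not> P xs"] by blast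
  then show ?thesis
    unfolding iso_def by (simp add: less_Suc_eq)
qed

definition eqv_structure :: "(nat \<Rightarrow> nat) \<Rightarrow> diagram" where
  "eqv_structure c = (\<lambda>n. \<exists>x y. n = atom_code 0 [x, y] \<and> c x = c y)"

lemma eqv_structure_atom_code [simp]: "eqv_structure c (atom_code 0 [x, y]) \<longleftrightarrow> c x = c y"
  by (auto simp: eqv_structure_def)

lemma eqv_structure_in_Structures: "eqv_structure c \<in> Structures [2]"
  by (auto simp: Structures_def eqv_structure_def well_formed_code_binary_iff)

lemma iso_eqv_structure_comp: "bij f \<Longrightarrow> iso [2] (eqv_structure (c \<circ> f)) (eqv_structure c)"
  by (auto simp: iso_binary_iff)

lemma iso_eqv_structureE:
  assumes "D \<in> Structures [2]" "iso [2] D (eqv_structure c)"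
  obtains f where "bij f" "D = eqv_structure (c \<circ> f)"
proof -
  obtain f where f: "bij f" "\<And>x y. D (atom_code 0 [x, y]) \<longleftrightarrow> c (f x) = c (f y)"
    using assms(2) by (auto simp: iso_binary_iff)
  have "D n = eqv_structure (c \<circ> f) n" for n
  proof (cases "\<exists>x y. n = atom_code 0 [x, y]")
    case False
    with assms(1) show ?thesis
      by (auto simp: Structures_def well_formed_code_binary_iff eqv_structure_def)
  qed (auto simp: f(2))
  with f(1) that show thesis
    by blast
qed

lemma eqv_structure_agree_below:
  assumes "\<And>x y. x \<le> N \<Longrightarrow> y \<le> N \<Longrightarrow> c' x = c' y \<longleftrightarrow> c x = c y" "n \<le> N"
  shows "eqv_structure c' n = eqv_structure c n"
proof (cases "\<exists>x y. n = atom_code 0 [x, y]")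
  case True
  then obtain x y where n: "n = atom_code 0 [x, y]"
    by blast
  have "x \<le> N" "y \<le> N"
    using le_atom_code_binary[where x = x and y = y] n assms(2) by linarith+
  with n show ?thesis
    by (simp add: assms(1))
qed (auto simp: eqv_structure_def)

text \<open>Since card of an infinite set is 0, infinite colour classes contribute 0.\<close>
definition class_sizes :: "(nat \<Rightarrow> nat) \<Rightarrow> nat set" where
  "class_sizes c = range (\<lambda>x. card {y. c y = c x})"

lemma class_sizes_comp_bij:
  assumes "bij f"
  shows "class_sizes (c \<circ> f) = class_sizes c"
proof -
  have "card {y. c (f y) = c (f x)} = card {z. c z = c (f x)}" for x
    using card_vimage_inj[of f "{z. c z = c (f x)}"] assms by (simp add: bij_def vimage_def)
  then have "class_sizes (c \<circ> f) = (\<lambda>z. card {y. c y = c z}) ` range f"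
    unfolding class_sizes_def by (simp add: image_image)
  with assms show ?thesis
    by (simp add: class_sizes_def bij_is_surj)
qed

lemma class_sizes_eq_if_iso:
  assumes "iso [2] (eqv_structure c) (eqv_structure c')"
  shows "class_sizes c = class_sizes c'"
proof -
  obtain f where "bij f" "\<And>x y. c x = c y \<longleftrightarrow> c' (f x) = c' (f y)"
    using assms by (auto simp: iso_binary_iff)
  then have "class_sizes c = class_sizes (c' \<circ> f)"
    by (simp add: class_sizes_def)
  with \<open>bij f\<close> show ?thesis
    by (simp add: class_sizes_comp_bij)
qed

section \<open>Deciding in the limit between a class of size 1 and a class of size 2\<close>

abbreviation rel :: "diagram \<Rightarrow> nat \<Rightarrow> nat \<Rightarrow> bool" where
  "rel D x y \<equiv> D (atom_code 0 [x, y])"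

definition looks_singleton :: "diagram \<Rightarrow> nat \<Rightarrow> nat \<Rightarrow> bool" where
  "looks_singleton D s x \<longleftrightarrow> (\<forall>y<s. y \<noteq> x \<longrightarrow> \<not> rel D x y)"

definition pair_refuted :: "diagram \<Rightarrow> nat \<Rightarrow> nat \<Rightarrow> bool" where
  "pair_refuted D s j \<longleftrightarrow> (case prod_decode j of (a, b) \<Rightarrow>
     a \<noteq> b \<and> rel D a b \<longrightarrow> (\<exists>y<s. y \<noteq> a \<and> y \<noteq> b \<and> rel D a y))"

text \<open>If there is a singleton class {x0} but no class of size 2, then from some stage on x0
  looks like a singleton and every pair coded by some j \<le> x0 is refuted, so the guess is 0.
  If there is a class {a, b} but no singleton class, then from some stage on no x below
  prod_encode (a, b) looks like a singleton, while the pair (a, b) is never refuted, so the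
  guess is 1.\<close>
definition guess :: "diagram \<Rightarrow> nat \<Rightarrow> nat" where
  "guess D s = (if \<exists>x<s. looks_singleton D s x \<and> (\<forall>j\<le>x. pair_refuted D s j) then 0 else 1)"

lemma pair_refuted_prod_encode:
  "pair_refuted D s (prod_encode (a, b)) \<longleftrightarrow>
     (a \<noteq> b \<and> rel D a b \<longrightarrow> (\<exists>y<s. y \<noteq> a \<and> y \<noteq> b \<and> rel D a y))"
  by (simp add: pair_refuted_def)

lemma ex_prod_encode: obtains a b where "j = prod_encode (a, b)"
  by (metis prod_decode_inverse surj_pair)

lemma guess_eq_if_agree_below:
  assumes "\<And>x y. x < s \<Longrightarrow> y < s \<Longrightarrow> rel D x y = rel D' x y"
  shows "guess D s = guess D' s"
proof -
  have "looks_singleton D s x = looks_singleton D' s x" if "x < s" for x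
    using assms that by (simp add: looks_singleton_def)
  moreover have "pair_refuted D s j = pair_refuted D' s j" if "j < s" for j
  proof -
    obtain a b where j: "j = prod_encode (a, b)"
      by (rule ex_prod_encode)
    with that have "a < s" "b < s"
      using le_prod_encode_1[of a b] le_prod_encode_2[of b a] by linarith+
    with assms show ?thesis
      unfolding j pair_refuted_prod_encode by auto
  qed
  ultimately have "(\<exists>x<s. looks_singleton D s x \<and> (\<forall>j\<le>x. pair_refuted D s j)) \<longleftrightarrow>
      (\<exists>x<s. looks_singleton D' s x \<and> (\<forall>j\<le>x. pair_refuted D' s j))"
    by (meson le_less_trans)
  then show ?thesis
    by (simp add: guess_def)
qed

lemma continuous_map_guess: "continuous_map cantor_top baire_top guess"
  unfolding cantor_top_def baire_top_def
proof (rule continuous_map_product_discrete_if_finitely_determined)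
  fix s
  show "\<exists>C. finite C \<and> (\<forall>D D'. (\<forall>c\<in>C. D c = D' c) \<longrightarrow> guess D s = guess D' s)"
    by (intro exI[of _ "(\<lambda>(x, y). atom_code 0 [x, y]) ` ({..<s} \<times> {..<s})"])
      (auto intro!: guess_eq_if_agree_below)
qed

lemma eventually_pair_refuted:
  assumes "2 \<notin> class_sizes c"
  shows "eventually (\<lambda>s. pair_refuted (eqv_structure c) s j) sequentially"
proof -
  obtain a b where j: "j = prod_encode (a, b)"
    by (rule ex_prod_encode)
  show ?thesis
  proof (cases "a \<noteq> b \<and> c a = c b")
    case True
    have "card {y. c y = c a} \<noteq> 2"
      using assms unfolding class_sizes_def by (metis rangeI)
    with True have "card {y. c y = c a} \<noteq> card {a, b}"
      by simp
    moreover have "{a, b} \<subseteq> {y. c y = c a}"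
      using True by auto
    ultimately have "\<not> {y. c y = c a} \<subseteq> {a, b}"
      by (metis subset_antisym)
    then obtain z where "c z = c a" "z \<noteq> a" "z \<noteq> b"
      by blast
    then have "pair_refuted (eqv_structure c) s j" if "z < s" for s
      using that by (auto simp: j pair_refuted_prod_encode)
    then show ?thesis
      by (auto intro: eventually_sequentiallyI[of "Suc z"])
  qed (auto simp: j pair_refuted_prod_encode)
qed

lemma eventually_not_looks_singleton:
  assumes "1 \<notin> class_sizes c"
  shows "eventually (\<lambda>s. \<not> looks_singleton (eqv_structure c) s x) sequentially"
proof -
  have "card {y. c y = c x} \<noteq> 1"
    using assms unfolding class_sizes_def by (metis rangeI)
  then have "card {y. c y = c x} \<noteq> card {x}"
    by simp
  moreover have "{x} \<subseteq> {y. c y = c x}"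
    by simp
  ultimately have "\<not> {y. c y = c x} \<subseteq> {x}"
    by (metis subset_antisym)
  then obtain z where "c z = c x" "z \<noteq> x"
    by blast
  then have "\<not> looks_singleton (eqv_structure c) s x" if "z < s" for s
    using that by (auto simp: looks_singleton_def)
  then show ?thesis
    by (auto intro: eventually_sequentiallyI[of "Suc z"])
qed

lemma eventually_guess_eq_0:
  assumes "1 \<in> class_sizes c" "2 \<notin> class_sizes c"
  shows "eventually (\<lambda>s. guess (eqv_structure c) s = 0) sequentially"
proof -
  obtain x0 where "1 = card {y. c y = c x0}"
    using assms(1) unfolding class_sizes_def by (rule rangeE)
  then obtain z where z: "{y. c y = c x0} = {z}"
    by (metis card_1_singletonE)
  have "x0 \<in> {y. c y = c x0}"
    by simp
  with z have "{y. c y = c x0} = {x0}"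
    by (simp only: singleton_iff)
  then have singleton: "looks_singleton (eqv_structure c) s x0" for s
    unfolding looks_singleton_def by (simp add: set_eq_iff) (metis)
  have "eventually (\<lambda>s. \<forall>j\<in>{..x0}. pair_refuted (eqv_structure c) s j) sequentially"
    using eventually_pair_refuted[OF assms(2)] by (intro eventually_ball_finite) auto
  with eventually_gt_at_top[of x0] show ?thesis
  proof eventually_elim
    case (elim s)
    with singleton have "\<exists>x<s. looks_singleton (eqv_structure c) s x \<and>
        (\<forall>j\<le>x. pair_refuted (eqv_structure c) s j)"
      by (intro exI[of _ x0]) auto
    then show ?case
      by (simp add: guess_def)
  qed
qed

lemma eventually_guess_eq_1:
  assumes "2 \<in> class_sizes c" "1 \<notin> class_sizes c"
  shows "eventually (\<lambda>s. guess (eqv_structure c) s = 1) sequentially"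
proof -
  obtain a where "2 = card {y. c y = c a}"
    using assms(1) unfolding class_sizes_def by (rule rangeE)
  then obtain u v where uv: "{y. c y = c a} = {u, v}" "u \<noteq> v"
    by (metis card_2_iff)
  have "u \<in> {y. c y = c a}"
    unfolding uv(1) by simp
  then have "c u = c a"
    by simp
  with uv(1) have "{y. c y = c u} = {u, v}"
    by simp
  then have same_class_u: "c y = c u \<longleftrightarrow> y = u \<or> y = v" for y
    by blast
  have never_refuted: "\<not> pair_refuted (eqv_structure c) s (prod_encode (u, v))" for s
    unfolding pair_refuted_prod_encode using uv(2) same_class_u by (metis eqv_structure_atom_code)
  have "eventually (\<lambda>s. \<forall>x\<in>{..<prod_encode (u, v)}. \<not> looks_singleton (eqv_structure c) s x)
      sequentially"
    using eventually_not_looks_singleton[OF assms(2)] by (intro eventually_ball_finite) auto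
  then show ?thesis
  proof eventually_elim
    case (elim s)
    have "\<not> (looks_singleton (eqv_structure c) s x \<and> (\<forall>j\<le>x. pair_refuted (eqv_structure c) s j))"
      for x
      using elim never_refuted[of s] by (cases "x < prod_encode (u, v)") (auto simp: not_less)
    then show ?case
      by (auto simp: guess_def)
  qed
qed

definition tail_colour :: "nat \<Rightarrow> nat" where
  "tail_colour m = fst (prod_decode m) + 2"

text \<open>Both colourings have infinitely many infinite classes, given by the colours \<ge> 2, each
  of which tail_colour takes infinitely often.\<close>
definition colouring_1 :: "nat \<Rightarrow> nat" where
  "colouring_1 n = (if n = 0 then 0 else if n = 1 then 2 else tail_colour (n - 2))"

definition colouring_2 :: "nat \<Rightarrow> nat" where
  "colouring_2 n = (if n \<le> 1 then 0 else tail_colour (n - 2))"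

abbreviation K1 :: diagram where
  "K1 \<equiv> eqv_structure colouring_1"

abbreviation K2 :: diagram where
  "K2 \<equiv> eqv_structure colouring_2"

lemma tail_colour_prod_encode [simp]: "tail_colour (prod_encode (a, b)) = a + 2"
  by (simp add: tail_colour_def)

lemma tail_colour_ge: "2 \<le> tail_colour m"
  by (simp add: tail_colour_def)

lemma tail_colour_le: "tail_colour m \<le> m + 2"
  using le_prod_encode_1[of "fst (prod_decode m)" "snd (prod_decode m)"]
  by (simp add: tail_colour_def)

lemma colouring_2_le: "colouring_2 x \<le> x"
  using tail_colour_le[of "x - 2"] by (cases "x \<le> 1") (auto simp: colouring_2_def)

lemma colour_taken_beyond:
  assumes "2 \<le> L"
  obtains z where "M < z" "colouring_1 z = L" "colouring_2 z = L"
proof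
  let ?z = "prod_encode (L - 2, M) + 2"
  show "M < ?z"
    using le_prod_encode_2[of M "L - 2"] by simp
  show "colouring_1 ?z = L" "colouring_2 ?z = L"
    using assms by (simp_all add: colouring_1_def colouring_2_def)
qed

lemma infinite_colour_classes:
  assumes "2 \<le> L"
  shows "infinite {z. colouring_1 z = L}" "infinite {z. colouring_2 z = L}"
proof -
  have "\<exists>z>M. colouring_1 z = L \<and> colouring_2 z = L" for M
    using colour_taken_beyond[OF assms] by metis
  then show "infinite {z. colouring_1 z = L}" "infinite {z. colouring_2 z = L}"
    unfolding infinite_nat_iff_unbounded by auto
qed

lemma range_two_values:
  assumes "\<And>x. f x = a \<or> f x = b" "f x = a" "f y = b"
  shows "range f = {a, b}"
  using assms by (auto intro: range_eqI)

lemma class_sizes_colouring_1: "class_sizes colouring_1 = {0, 1}"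
proof -
  have "{y. colouring_1 y = colouring_1 0} = {0}"
    by (auto simp: colouring_1_def tail_colour_def)
  then have "card {y. colouring_1 y = colouring_1 0} = 1"
    by simp
  moreover have "card {y. colouring_1 y = colouring_1 x} = 0" if "x \<noteq> 0" for x
  proof -
    have "2 \<le> colouring_1 x"
      using that tail_colour_ge by (simp add: colouring_1_def)
    then show ?thesis
      using infinite_colour_classes(1) by simp
  qed
  ultimately show ?thesis
    unfolding class_sizes_def by (intro range_two_values[where x = 1 and y = 0]) (auto, metis gr0I)
qed

lemma class_sizes_colouring_2: "class_sizes colouring_2 = {0, 2}"
proof -
  have "{y. colouring_2 y = colouring_2 x} = {0, 1}" if "x \<le> 1" for x
    using that by (auto simp: colouring_2_def tail_colour_def)
  then have "card {y. colouring_2 y = colouring_2 x} = 2" if "x \<le> 1" for x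
    using that by simp
  moreover have "card {y. colouring_2 y = colouring_2 x} = 0" if "\<not> x \<le> 1" for x
  proof -
    have "2 \<le> colouring_2 x"
      using that tail_colour_ge by (simp add: colouring_2_def)
    then show ?thesis
      using infinite_colour_classes(2) by simp
  qed
  ultimately show ?thesis
    unfolding class_sizes_def by (intro range_two_values[where x = 2 and y = 0]) auto
qed

lemma not_iso_K1_K2: "\<not> iso [2] K1 K2"
proof
  assume "iso [2] K1 K2"
  then have "class_sizes colouring_1 = class_sizes colouring_2"
    by (rule class_sizes_eq_if_iso)
  then show False
    unfolding class_sizes_colouring_1 class_sizes_colouring_2 by (simp add: doubleton_eq_iff)
qed

lemma family_K1_K2: "family [2] {K1, K2}"
  using eqv_structure_in_Structures not_iso_K1_K2 iso_sym unfolding family_def by auto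

lemma eqv_structure_comp_in_LD:
  assumes "bij f" "c = colouring_1 \<or> c = colouring_2"
  shows "eqv_structure (c \<circ> f) \<in> LD [2] {K1, K2}"
  using assms eqv_structure_in_Structures[of "c \<circ> f"] iso_eqv_structure_comp[of f c]
  unfolding LD_def by auto


lemma eventually_guess_in_LD:
  assumes "D \<in> LD [2] {K1, K2}"
  shows "eventually (\<lambda>s. guess D s = (if iso [2] D K1 then 0 else 1)) sequentially"
proof -
  have D: "D \<in> Structures [2]" "iso [2] D K1 \<or> iso [2] D K2"
    using assms by (auto simp: LD_def)
  show ?thesis
  proof (cases "iso [2] D K1")
    case True
    obtain f where "bij f" "D = eqv_structure (colouring_1 \<circ> f)"
      by (rule iso_eqv_structureE[OF D(1) True])
    then show ?thesis
      using True eventually_guess_eq_0[of "colouring_1 \<circ> f"]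
      by (simp add: class_sizes_comp_bij class_sizes_colouring_1)
  next
    case False
    with D(2) have "iso [2] D K2"
      by blast
    obtain f where "bij f" "D = eqv_structure (colouring_2 \<circ> f)"
      by (rule iso_eqv_structureE[OF D(1) \<open>iso [2] D K2\<close>])
    then show ?thesis
      using False eventually_guess_eq_1[of "colouring_2 \<circ> f"]
      by (simp add: class_sizes_comp_bij class_sizes_colouring_2)
  qed
qed

lemma learnable_K1_K2_E3: "learnable [2] {K1, K2} baire_top E3"
  unfolding learnable_def
proof (intro exI conjI ballI)
  show "continuous_map (subtopology cantor_top (LD [2] {K1, K2})) baire_top guess"
    by (rule continuous_map_from_subtopology[OF continuous_map_guess])
  fix S S' assume S: "S \<in> LD [2] {K1, K2}" and S': "S' \<in> LD [2] {K1, K2}"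
  have "E3 (guess S) (guess S') \<longleftrightarrow>
      (if iso [2] S K1 then 0 else 1 :: nat) = (if iso [2] S' K1 then 0 else 1)"
    using eventually_guess_in_LD[OF S] eventually_guess_in_LD[OF S'] by (rule E3_eventually_const_iff)
  also have "\<dots> \<longleftrightarrow> iso [2] S S'"
    using iso_iff_iso_same_in_LD_pair[OF S S' not_iso_K1_K2] by simp
  finally show "iso [2] S S' \<longleftrightarrow> E3 (guess S) (guess S')"
    by simp
qed

section \<open>Finite approximations and E_range-learners\<close>

lemma iso_if_E_range_learner_mutually_approximable:
  assumes G: "continuous_map (subtopology cantor_top (LD sig K)) baire_top G"
    "\<forall>S\<in>LD sig K. \<forall>S'\<in>LD sig K. iso sig S S' \<longleftrightarrow> E_range (G S) (G S')"
    and XY: "X \<in> LD sig K" "Y \<in> LD sig K"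
    and "\<And>N. \<exists>D\<in>LD sig K. iso sig D Y \<and> (\<forall>n\<le>N. D n = X n)"
    and "\<And>N. \<exists>D\<in>LD sig K. iso sig D X \<and> (\<forall>n\<le>N. D n = Y n)"
  shows "iso sig X Y"
proof -
  have range_subset: "range (G A) \<subseteq> range (G B)"
    if A: "A \<in> LD sig K" and B: "B \<in> LD sig K"
      and approx: "\<And>N. \<exists>D\<in>LD sig K. iso sig D B \<and> (\<forall>n\<le>N. D n = A n)" for A B
  proof (rule image_subsetI)
    fix m
    obtain N where N: "\<And>D. D \<in> LD sig K \<Longrightarrow> \<forall>n\<le>N. D n = A n \<Longrightarrow> G D m = G A m"
      using continuous_map_cantor_baire_finitely_determined[OF G(1) A] by blast
    obtain D where D: "D \<in> LD sig K" "iso sig D B" "\<forall>n\<le>N. D n = A n"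
      using approx by blast
    have "G A m = G D m"
      using N D(1,3) by simp
    also have "\<dots> \<in> range (G B)"
      using G(2) D(1,2) B rangeI[of "G D" m] by (simp add: E_range_def)
    finally show "G A m \<in> range (G B)" .
  qed
  have "E_range (G X) (G Y)"
    unfolding E_range_def using range_subset assms(5,6) XY by blast
  with G(2) XY show ?thesis
    by blast
qed

lemma K1_approximable_by_K2:
  "\<exists>D\<in>LD [2] {K1, K2}. iso [2] D K2 \<and> (\<forall>n\<le>N. D n = K1 n)"
proof -
  define z where "z = prod_encode (0, N) + 2"
  have "N < z"
    using le_prod_encode_2[of N 0] by (simp add: z_def)
  define f where "f = Transposition.transpose 1 z"
  have colours: "colouring_2 (f x) = colouring_1 x" if "x \<le> N" for x
    using \<open>N < z\<close> that
    by (auto simp: f_def z_def colouring_1_def colouring_2_def Transposition.transpose_def)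
  show ?thesis
  proof (intro bexI conjI allI impI)
    show "eqv_structure (colouring_2 \<circ> f) \<in> LD [2] {K1, K2}"
      by (rule eqv_structure_comp_in_LD) (simp_all add: f_def)
    show "iso [2] (eqv_structure (colouring_2 \<circ> f)) K2"
      by (rule iso_eqv_structure_comp) (simp add: f_def)
    fix n assume "n \<le> N"
    then show "eqv_structure (colouring_2 \<circ> f) n = K1 n"
      by (rule eqv_structure_agree_below[rotated]) (simp add: colours)
  qed
qed

lemma K2_approximable_by_K1:
  "\<exists>D\<in>LD [2] {K1, K2}. iso [2] D K1 \<and> (\<forall>n\<le>N. D n = K2 n)"
proof -
  define u where "u = prod_encode (N + 1, N) + 2"
  define v where "v = prod_encode (N + 1, N + 1) + 2"
  have "N + 1 < u" "N + 1 < v" "u \<noteq> v"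
    using le_prod_encode_2[of N "N + 1"] le_prod_encode_2[of "N + 1" "N + 1"]
    by (simp_all add: u_def v_def)
  have "colouring_1 u = N + 3" "colouring_1 v = N + 3"
    using \<open>N + 1 < u\<close> \<open>N + 1 < v\<close> by (simp_all add: colouring_1_def u_def v_def)
  define f where "f = Transposition.transpose 0 u \<circ> Transposition.transpose 1 v"
  have "bij f"
    by (simp add: f_def bij_comp)
  have f_01: "f 0 = u" "f 1 = v"
    using \<open>N + 1 < u\<close> \<open>N + 1 < v\<close> \<open>u \<noteq> v\<close> by (simp_all add: f_def)
  have f_id: "f x = x" if "2 \<le> x" "x \<le> N" for x
    using \<open>N + 1 < u\<close> \<open>N + 1 < v\<close> that by (simp add: f_def)
  text \<open>The new colour N + 3 of 0 and 1 exceeds every colour of 2, ..., N.\<close>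
  have colours: "colouring_1 (f x) = (if colouring_2 x = 0 then N + 3 else colouring_2 x)"
    if "x \<le> N" for x
  proof -
    consider "x = 0" | "x = 1" | "2 \<le> x"
      by arith
    then show ?thesis
    proof cases
      case 3
      with that tail_colour_ge[of "x - 2"] show ?thesis
        by (simp add: f_id colouring_1_def colouring_2_def)
    qed (simp_all add: f_01[simplified] \<open>colouring_1 u = N + 3\<close> \<open>colouring_1 v = N + 3\<close> colouring_2_def)
  qed
  have same_colour_iff: "colouring_1 (f x) = colouring_1 (f y) \<longleftrightarrow> colouring_2 x = colouring_2 y"
    if "x \<le> N" "y \<le> N" for x y
    using colours[OF that(1)] colours[OF that(2)] colouring_2_le[of x] colouring_2_le[of y] that
    by auto
  show ?thesis
  proof (intro bexI conjI allI impI)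
    show "eqv_structure (colouring_1 \<circ> f) \<in> LD [2] {K1, K2}"
      using \<open>bij f\<close> by (rule eqv_structure_comp_in_LD) simp
    show "iso [2] (eqv_structure (colouring_1 \<circ> f)) K1"
      using \<open>bij f\<close> by (rule iso_eqv_structure_comp)
    fix n assume "n \<le> N"
    then show "eqv_structure (colouring_1 \<circ> f) n = K2 n"
      by (rule eqv_structure_agree_below[rotated]) (simp add: same_colour_iff)
  qed
qed

lemma not_learnable_K1_K2_E_range: "\<not> learnable [2] {K1, K2} baire_top E_range"
proof
  assume "learnable [2] {K1, K2} baire_top E_range"
  then obtain G where "continuous_map (subtopology cantor_top (LD [2] {K1, K2})) baire_top G"
    "\<forall>S\<in>LD [2] {K1, K2}. \<forall>S'\<in>LD [2] {K1, K2}. iso [2] S S' \<longleftrightarrow> E_range (G S) (G S')"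
    unfolding learnable_def by blast
  moreover have "K1 \<in> LD [2] {K1, K2}" "K2 \<in> LD [2] {K1, K2}"
    using eqv_structure_in_Structures iso_refl by (auto simp: LD_def)
  ultimately have "iso [2] K1 K2"
    using K1_approximable_by_K2 K2_approximable_by_K1
    by (rule iso_if_E_range_learner_mutually_approximable)
  with not_iso_K1_K2 show False ..
qed

theorem mainTheorem9:
  shows "learn_le baire_top E_range baire_top E3 \<and>
         \<not> learn_le baire_top E3 baire_top E_range"
proof
  show "learn_le baire_top E_range baire_top E3"
    by (rule learn_le_E_range_E3)
  show "\<not> learn_le baire_top E3 baire_top E_range"
    unfolding learn_le_def
    using family_K1_K2 learnable_K1_K2_E3 not_learnable_K1_K2_E_range by blast
qed

end
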